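(* Let $\mathcal{G}=(\mathcal{V},\mathcal{A})$ be the information-flow graph of a single-sender single-uniprior index-coding instance with message lengths $q_1,\dots,q_n$. Then \[ \ell^*(\mathcal{G}) \geq \max_{\mathcal{G}'=(\mathcal{V},\mathcal{A}'):\ \mathcal{A}'\subseteq\mathcal{A}} \ \sum_{i:\ i \text{ is a predecessor of some vertex in } \mathcal{L}(\mathcal{G}')} q_i . \]
   Context: Single-sender single-uniprior index coding: there are $n$ receivers and $n$ independent messages $x_1,\dots,x_n$; message $x_i$ consists of $q_i\ge 1$ bits, each independently uniformly distributed on $\{0,1\}$. A single sender knows all messages. Receiver $i$ knows $x_i$ a priori and requests a set $\mathcal{W}_i$ of messages with $x_i\notin\mathcal{W}_i$. The information-flow graph is the directed graph $\mathcal{G}=(\mathcal{V},\mathcal{A})$ with $\mathcal{V}=\{1,\dots,n\}$ and an arc $(j\to i)\in\mathcal{A}$ iff $x_j\in\mathcal{W}_i$. An index code of length $\ell$ consists of an encoding function $E:\{0,1\}^{\sum_i q_i}\to\{0,1\}^\ell$ and, for each receiver $i$, a decoding function $D_i$ such that $D_i(E(x_1,\dots,x_n),x_i)$ equals the tuple of messages in $\mathcal{W}_i$ for all values of the messages. $\ell^*(\mathcal{G})$ denotes the minimum length of an index code. For a directed graph $\mathcal{H}$, a leaf vertex is a vertex with no outgoing arcs and $\mathcal{L}(\mathcal{H})$ is the set of leaf vertices of $\mathcal{H}$. A vertex $j$ is a predecessor of vertex $i$ in $\mathcal{H}$ iff there is a directed path in $\mathcal{H}$ from $j$ to $i$. 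*)

theory Defs
  imports Main
begin

(* Vertices are {1..n}; message x_i is a bit string (bool list) of length q i.
   A message assignment is canonical: x j = [] outside {1..n}. *)
definition valid_msgs :: "nat \<Rightarrow> (nat \<Rightarrow> nat) \<Rightarrow> (nat \<Rightarrow> bool list) \<Rightarrow> bool" where
  "valid_msgs n q x \<longleftrightarrow> (\<forall>i\<in>{1..n}. length (x i) = q i) \<and> (\<forall>j. j \<notin> {1..n} \<longrightarrow> x j = [])"

(* Information-flow graph arcs A: (j,i) \<in> A iff x_j \<in> W_i. *)
definition is_index_code ::
  "nat \<Rightarrow> (nat \<Rightarrow> nat) \<Rightarrow> (nat \<times> nat) set \<Rightarrow> nat \<Rightarrow>
   ((nat \<Rightarrow> bool list) \<Rightarrow> bool list) \<Rightarrow> (nat \<Rightarrow> bool list \<Rightarrow> bool list \<Rightarrow> nat \<Rightarrow> bool list) \<Rightarrow> bool" where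
  "is_index_code n q A l E D \<longleftrightarrow>
     (\<forall>x. valid_msgs n q x \<longrightarrow>
        length (E x) = l \<and>
        (\<forall>i\<in>{1..n}. \<forall>j. (j, i) \<in> A \<longrightarrow> D i (E x) (x i) j = x j))"

definition has_index_code :: "nat \<Rightarrow> (nat \<Rightarrow> nat) \<Rightarrow> (nat \<times> nat) set \<Rightarrow> nat \<Rightarrow> bool" where
  "has_index_code n q A l \<longleftrightarrow> (\<exists>E D. is_index_code n q A l E D)"

definition opt_len :: "nat \<Rightarrow> (nat \<Rightarrow> nat) \<Rightarrow> (nat \<times> nat) set \<Rightarrow> nat" where
  "opt_len n q A = (LEAST l. has_index_code n q A l)"

definition leaves :: "nat set \<Rightarrow> (nat \<times> nat) set \<Rightarrow> nat set" where
  "leaves V A' = {i \<in> V. \<not> (\<exists>k. (i, k) \<in> A')}"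

definition predecessor :: "(nat \<times> nat) set \<Rightarrow> nat \<Rightarrow> nat \<Rightarrow> bool" where
  "predecessor A' j i \<longleftrightarrow> (j, i) \<in> A'\<^sup>+"

end

theory Submission
  imports Defs "HOL-Library.FuncSet"
begin

text \<open>Fix the messages outside the set P of vertices that have a path to a leaf of A'; the
  leaves themselves lie outside P. The codeword then determines the messages on P: along an arc
  (j, k) of A', receiver k decodes x j from the codeword and x k, so knowledge propagates
  backwards along paths from the leaves. Hence the 2 ^ (\<Sum>j\<in>P. q j) choices of messages on P
  give distinct codewords of length l, and \<Sum>j\<in>P. q j \<le> l.\<close>

definition leaf_ancestors :: "nat set \<Rightarrow> (nat \<times> nat) set \<Rightarrow> nat set" where
  "leaf_ancestors V A' = {i \<in> V. \<exists>l \<in> leaves V A'. predecessor A' i l}"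

lemma predecessor_notin_leaves: "predecessor A' i l \<Longrightarrow> i \<notin> leaves V A'"
  unfolding predecessor_def leaves_def by (auto elim: converse_tranclE)

lemma leaves_disjoint_leaf_ancestors: "leaves V A' \<inter> leaf_ancestors V A' = {}"
  unfolding leaf_ancestors_def using predecessor_notin_leaves by blast

lemma card_bool_lists: "card {xs::bool list. length xs = k} = 2 ^ k"
  using card_lists_length_eq[of "UNIV :: bool set" k] by (simp add: card_UNIV_bool)

lemma finite_bool_lists: "finite {xs::bool list. length xs = k}"
  using finite_lists_length_eq[of "UNIV :: bool set" k] by simp

lemma card_le_pow2_if_inj_on_bool_lists:
  fixes E :: "'a \<Rightarrow> bool list"
  assumes "inj_on E S" and "\<forall>x\<in>S. length (E x) = l"
  shows "card S \<le> 2 ^ l"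
proof -
  have "card S \<le> card {xs::bool list. length xs = l}"
    by (rule card_inj_on_le[OF assms(1) _ finite_bool_lists]) (use assms(2) in auto)
  then show ?thesis by (simp add: card_bool_lists)
qed

lemma card_valid_msgs_varying_on:
  assumes "P \<subseteq> {1..n}"
  shows "card {x. valid_msgs n q x \<and> (\<forall>j\<in>{1..n} - P. x j = replicate (q j) False)}
           = 2 ^ (\<Sum>j\<in>P. q j)"
proof -
  let ?S = "{x. valid_msgs n q x \<and> (\<forall>j\<in>{1..n} - P. x j = replicate (q j) False)}"
  let ?B = "\<lambda>j. {xs::bool list. length xs = q j}"
  have finP: "finite P" using assms finite_subset by blast
  have "bij_betw (\<lambda>x. restrict x P) ?S (PiE P ?B)"
  proof (rule bij_betw_imageI)
    show "inj_on (\<lambda>x. restrict x P) ?S"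
    proof (rule inj_onI, rule ext)
      fix x x' j assume "x \<in> ?S" "x' \<in> ?S" and r: "restrict x P = restrict x' P"
      show "x j = x' j"
      proof (cases "j \<in> P")
        case True
        then show ?thesis using fun_cong[OF r, of j] by simp
      next
        case False
        then show ?thesis
          using \<open>x \<in> ?S\<close> \<open>x' \<in> ?S\<close> unfolding valid_msgs_def by (cases "j \<in> {1..n}") auto
      qed
    qed
    show "(\<lambda>x. restrict x P) ` ?S = PiE P ?B"
    proof
      show "(\<lambda>x. restrict x P) ` ?S \<subseteq> PiE P ?B"
        using assms unfolding valid_msgs_def by auto
    next
      show "PiE P ?B \<subseteq> (\<lambda>x. restrict x P) ` ?S"
      proof
        fix y assume y: "y \<in> PiE P ?B"
        define x where "x = (\<lambda>j. if j \<in> P then y j else if j \<in> {1..n} then replicate (q j) False else [])"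
        have "x \<in> ?S" using y assms unfolding x_def valid_msgs_def by auto
        moreover have "restrict x P = y" using y unfolding x_def by (auto simp: PiE_def extensional_def)
        ultimately show "y \<in> (\<lambda>x. restrict x P) ` ?S" by force
      qed
    qed
  qed
  then have "card ?S = card (PiE P ?B)" by (rule bij_betw_same_card)
  also have "\<dots> = 2 ^ (\<Sum>j\<in>P. q j)"
    using finP by (simp add: card_PiE card_bool_lists power_sum)
  finally show ?thesis .
qed

lemma index_code_agree_along_trancl:
  assumes code: "is_index_code n q A l E D" and "A' \<subseteq> A" and "A \<subseteq> {1..n} \<times> {1..n}"
    and v: "valid_msgs n q x" "valid_msgs n q x'" and eq: "E x = E x'"
    and "(j, k) \<in> A'\<^sup>+" and "x k = x' k"
  shows "x j = x' j"
proof -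
  have step: "x j = x' j" if "(j, m) \<in> A'" "x m = x' m" for j m
  proof -
    have "(j, m) \<in> A" "m \<in> {1..n}" using that assms(2,3) by auto
    then have "D m (E x) (x m) j = x j" "D m (E x') (x' m) j = x' j"
      using code v unfolding is_index_code_def by blast+
    then show ?thesis using eq that(2) by simp
  qed
  show ?thesis
    using assms(7,8) by (induction j rule: converse_trancl_induct) (blast intro: step)+
qed

lemma index_code_inj_off_leaf_ancestors:
  assumes code: "is_index_code n q A l E D" and sub: "A' \<subseteq> A" and AV: "A \<subseteq> {1..n} \<times> {1..n}"
    and v: "valid_msgs n q x" "valid_msgs n q x'" and eq: "E x = E x'"
    and off: "\<forall>j\<in>{1..n} - leaf_ancestors {1..n} A'. x j = x' j"
  shows "x = x'"
proof
  fix j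
  show "x j = x' j"
  proof (cases "j \<in> leaf_ancestors {1..n} A'")
    case True
    then obtain k where k: "k \<in> leaves {1..n} A'" "(j, k) \<in> A'\<^sup>+"
      unfolding leaf_ancestors_def predecessor_def by auto
    have "k \<in> {1..n}" using k(1) by (simp add: leaves_def)
    moreover have "k \<notin> leaf_ancestors {1..n} A'"
      using k(1) leaves_disjoint_leaf_ancestors by blast
    ultimately have "x k = x' k" using off by blast
    then show ?thesis
      using index_code_agree_along_trancl[OF code sub AV v eq k(2)] by simp
  next
    case False
    then show ?thesis using off v unfolding valid_msgs_def by (cases "j \<in> {1..n}") auto
  qed
qed

lemma index_code_length_ge_leaf_ancestors:
  assumes code: "is_index_code n q A l E D" and sub: "A' \<subseteq> A" and AV: "A \<subseteq> {1..n} \<times> {1..n}"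
  shows "(\<Sum>j\<in>leaf_ancestors {1..n} A'. q j) \<le> l"
proof -
  let ?P = "leaf_ancestors {1..n} A'"
  let ?S = "{x. valid_msgs n q x \<and> (\<forall>j\<in>{1..n} - ?P. x j = replicate (q j) False)}"
  have "inj_on E ?S"
    by (rule inj_onI, rule index_code_inj_off_leaf_ancestors[OF code sub AV]) auto
  moreover have "\<forall>x\<in>?S. length (E x) = l"
    using code unfolding is_index_code_def by blast
  ultimately have "card ?S \<le> 2 ^ l"
    by (rule card_le_pow2_if_inj_on_bool_lists)
  moreover have "card ?S = 2 ^ (\<Sum>j\<in>?P. q j)"
    by (rule card_valid_msgs_varying_on) (auto simp: leaf_ancestors_def)
  ultimately show ?thesis by simp
qed

lemma inj_on_concat_valid_msgs:
  "inj_on (\<lambda>x. concat (map x [1..<n+1])) {x. valid_msgs n q x}"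
proof (rule inj_onI)
  fix x x' assume v: "x \<in> {x. valid_msgs n q x}" "x' \<in> {x. valid_msgs n q x}"
    and eq: "concat (map x [1..<n+1]) = concat (map x' [1..<n+1])"
  have "map x [1..<n+1] = map x' [1..<n+1]"
    using v by (intro concat_injective[OF eq]) (auto simp: valid_msgs_def zip_map_map zip_same simp del: upt_Suc)
  then have "\<forall>j\<in>{1..n}. x j = x' j" by auto
  then show "x = x'" using v unfolding valid_msgs_def by fastforce
qed

text \<open>Sending all messages uncoded; each receiver inverts the injective encoder.\<close>
lemma has_index_code_sum_lengths: "has_index_code n q A (\<Sum>k\<in>{1..n}. q k)"
proof -
  define E where "E = (\<lambda>x::nat \<Rightarrow> bool list. concat (map x [1..<n+1]))"
  define D where "D = (\<lambda>(i::nat) e (y::bool list). THE x. valid_msgs n q x \<and> E x = e)"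
  have "is_index_code n q A (\<Sum>k\<in>{1..n}. q k) E D"
    unfolding is_index_code_def
  proof (intro allI impI conjI ballI)
    fix x i j assume v: "valid_msgs n q x"
    have "length (E x) = (\<Sum>k\<in>{1..<n+1}. length (x k))"
      by (simp add: E_def length_concat sum_list_distinct_conv_sum_set del: upt_Suc)
    also have "\<dots> = (\<Sum>k\<in>{1..n}. q k)"
      using v unfolding valid_msgs_def by (intro sum.cong) auto
    finally show "length (E x) = (\<Sum>k\<in>{1..n}. q k)" .
    have "(THE x'. valid_msgs n q x' \<and> E x' = E x) = x"
      using v inj_onD[OF inj_on_concat_valid_msgs] unfolding E_def by (intro the_equality) auto
    then show "D i (E x) (x i) j = x j" by (simp add: D_def)
  qed
  then show ?thesis unfolding has_index_code_def by blast
qed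

theorem lemma5:
  fixes n :: nat and q :: "nat \<Rightarrow> nat" and A :: "(nat \<times> nat) set"
  assumes "\<forall>i\<in>{1..n}. q i \<ge> 1"
    and "A \<subseteq> {1..n} \<times> {1..n}"
    and "\<forall>i. (i, i) \<notin> A"
  shows "opt_len n q A \<ge>
    Max {(\<Sum>i \<in> {i \<in> {1..n}. \<exists>l \<in> leaves {1..n} A'. predecessor A' i l}. q i) | A'. A' \<subseteq> A}"
proof -
  have "has_index_code n q A (opt_len n q A)"
    unfolding opt_len_def by (rule LeastI[of "has_index_code n q A", OF has_index_code_sum_lengths])
  then obtain E D where code: "is_index_code n q A (opt_len n q A) E D"
    unfolding has_index_code_def by blast
  let ?f = "\<lambda>A'. \<Sum>i\<in>leaf_ancestors {1..n} A'. q i"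
  have S: "{(\<Sum>i \<in> {i \<in> {1..n}. \<exists>l \<in> leaves {1..n} A'. predecessor A' i l}. q i) | A'. A' \<subseteq> A}
           = ?f ` Pow A"
    unfolding leaf_ancestors_def by auto
  have "finite A" using assms(2) finite_subset by blast
  then show ?thesis
    unfolding S using index_code_length_ge_leaf_ancestors[OF code _ assms(2)]
    by (subst Max_le_iff) auto
qed

end
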